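(* Let $\lambda, r, k$ be positive integers. Let $s_k(n,b)$ be the number of $r$-canonical secondary structures with minimum arc-length $\lambda$ on $n$ vertices having exactly $b$ rainbows of length $k$, and let $\mathbf{S}_k(x,u)=\sum_{n,b}s_k(n,b)x^nu^b$. Then $$\mathbf{S}_k(x,u)=\frac{1}{1-\mathbf{F}(x)-(u-1)f(k+1)x^{k+1}},$$ where $f(m)$ is the number of irreducible such structures on $m$ vertices and $\mathbf{F}(x)=\sum_{m\ge1}f(m)x^m$.
   Context: A diagram on $n$ vertices $1,\dots,n$ ($n\ge0$) is a set of arcs $(i,j)$ with $1\le i<j\le n$ such that no two arcs share an endpoint and no two arcs cross (there are no arcs $(i_1,j_1),(i_2,j_2)$ with $i_1<i_2<j_1<j_2$). The length of an arc $(i,j)$ is $j-i$. A stack is a maximal sequence of arcs $(i,j),(i+1,j-1),\dots,(i+s-1,j-s+1)$ of the diagram; $s$ is its length. An $r$-canonical secondary structure with minimum arc-length $\lambda$ is a diagram in which every arc has length at least $\lambda$ and every stack has length at least $r$ (the empty structure on $0$ vertices is counted). A rainbow is an arc $(i,j)$ maximal for the partial order $(i,j)\preceq(i',j')\iff i'\le i<j\le j'$. A structure is irreducible if it is the single vertex with no arcs ($n=1$) or it contains the arc $(1,n)$. *)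

theory Defs
  imports Complex_Main "HOL-Computational_Algebra.Formal_Power_Series"
begin

definition diagram :: "nat \<Rightarrow> (nat \<times> nat) set \<Rightarrow> bool" where
  "diagram n A \<longleftrightarrow>
     A \<subseteq> {(i,j). 1 \<le> i \<and> i < j \<and> j \<le> n} \<and>
     (\<forall>(i,j)\<in>A. \<forall>(i',j')\<in>A. (i,j) \<noteq> (i',j') \<longrightarrow> {i,j} \<inter> {i',j'} = {}) \<and>
     (\<not> (\<exists>(i1,j1)\<in>A. \<exists>(i2,j2)\<in>A. i1 < i2 \<and> i2 < j1 \<and> j1 < j2))"

definition is_stack :: "(nat \<times> nat) set \<Rightarrow> nat \<Rightarrow> nat \<Rightarrow> nat \<Rightarrow> bool" where
  "is_stack A i j s \<longleftrightarrow>
     s \<ge> 1 \<and> (\<forall>t<s. (i + t, j - t) \<in> A) \<and>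
     (i - 1, j + 1) \<notin> A \<and> (i + s, j - s) \<notin> A"

definition sec_struct :: "nat \<Rightarrow> nat \<Rightarrow> nat \<Rightarrow> (nat \<times> nat) set \<Rightarrow> bool" where
  "sec_struct r lam n A \<longleftrightarrow>
     diagram n A \<and>
     (\<forall>(i,j)\<in>A. j - i \<ge> lam) \<and>
     (\<forall>i j s. is_stack A i j s \<longrightarrow> s \<ge> r)"

definition rainbow :: "(nat \<times> nat) set \<Rightarrow> nat \<times> nat \<Rightarrow> bool" where
  "rainbow A a \<longleftrightarrow> a \<in> A \<and>
     (\<forall>(i',j')\<in>A. i' \<le> fst a \<and> snd a \<le> j' \<longrightarrow> (i',j') = a)"

definition irreducible_struct :: "nat \<Rightarrow> (nat \<times> nat) set \<Rightarrow> bool" where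
  "irreducible_struct n A \<longleftrightarrow> (n = 1 \<and> A = {}) \<or> (1, n) \<in> A"

definition s_count :: "nat \<Rightarrow> nat \<Rightarrow> nat \<Rightarrow> nat \<Rightarrow> nat \<Rightarrow> nat" where
  "s_count r lam k n b =
     card {A. sec_struct r lam n A \<and>
              card {a. rainbow A a \<and> snd a - fst a = k} = b}"

definition f_count :: "nat \<Rightarrow> nat \<Rightarrow> nat \<Rightarrow> nat" where
  "f_count r lam m = card {A. sec_struct r lam m A \<and> irreducible_struct m A}"

text \<open>S_k(x,u) = sum_{n,b} s_k(n,b) x^n u^b, for a value u; b ranges over 0..n
  (a structure on n vertices has at most n arcs).\<close>
definition S_gf :: "nat \<Rightarrow> nat \<Rightarrow> nat \<Rightarrow> real \<Rightarrow> real fps" where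
  "S_gf r lam k u = Abs_fps (\<lambda>n. \<Sum>b\<le>n. real (s_count r lam k n b) * u ^ b)"

definition F_gf :: "nat \<Rightarrow> nat \<Rightarrow> real fps" where
  "F_gf r lam = Abs_fps (\<lambda>m. if m \<ge> 1 then real (f_count r lam m) else 0)"

end

theory Submission
  imports Defs
begin

text \<open>If vertex 1 of a nonempty structure is paired with \<open>m\<close> (put \<open>m = 1\<close> if it is unpaired),
  noncrossing forces every arc to lie within \<open>1..m\<close> or entirely to the right of \<open>m\<close>. Hence a
  structure on \<open>n \<ge> 1\<close> vertices is, uniquely, an irreducible structure on \<open>m\<close> vertices followed
  by a shifted structure on \<open>n - m\<close> vertices, and its rainbows are those of the two parts. An
  irreducible block on \<open>m \<ge> 2\<close> vertices has the single rainbow \<open>(1, m)\<close>, of length \<open>m - 1\<close>,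
  and a one-vertex block has none. So the weights \<open>W n = \<Sum>\<^sub>b s\<^sub>k(n, b) u\<^sup>b\<close> satisfy
  \<open>W n = \<Sum>\<^sub>m f(m) c\<^sub>m W (n - m)\<close> with \<open>c\<^sub>m = u\<close> if \<open>m = k + 1\<close> and \<open>c\<^sub>m = 1\<close> otherwise,
  which says \<open>S = 1 + (F + (u - 1) f(k + 1) x\<^bsup>k + 1\<^esup>) S\<close>.\<close>

unbundle fps_syntax

lemma pairwise_Un_iff:
  assumes "symp R"
  shows "pairwise R (A \<union> B) \<longleftrightarrow> pairwise R A \<and> pairwise R B \<and> (\<forall>a\<in>A. \<forall>b\<in>B. a \<noteq> b \<longrightarrow> R a b)"
  using assms unfolding pairwise_def symp_def by (auto; metis)

lemma fps_eq_one_div_if_convolution_recurrence: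
  fixes f g :: "'a::field fps"
  assumes g0: "g $ 0 = 0" and f0: "f $ 0 = 1"
    and rec: "\<And>n. 0 < n \<Longrightarrow> f $ n = (\<Sum>i=1..n. g $ i * f $ (n - i))"
  shows "f = 1 / (1 - g)"
proof -
  have "f = 1 + g * f"
  proof (rule fps_ext)
    fix n
    show "f $ n = (1 + g * f) $ n"
    proof (cases "n = 0")
      case True
      then show ?thesis using f0 g0 by simp
    next
      case False
      have "(g * f) $ n = (\<Sum>i=0..n. g $ i * f $ (n - i))" by (rule fps_mult_nth)
      also have "\<dots> = (\<Sum>i=1..n. g $ i * f $ (n - i))"
        using g0 by (simp add: sum.atLeast_Suc_atMost)
      finally show ?thesis using False rec by simp
    qed
  qed
  then have "(1 - g) * f = 1" by (simp add: algebra_simps)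
  then have "inverse (1 - g) = f" by (rule fps_inverse_unique)
  moreover have "(1 - g) $ 0 \<noteq> 0" using g0 by simp
  ultimately show ?thesis by (simp add: fps_divide_unit)
qed

definition arcs_on :: "nat \<Rightarrow> (nat \<times> nat) set" where
  "arcs_on n = {(i, j). 1 \<le> i \<and> i < j \<and> j \<le> n}"

lemma finite_arcs_on: "finite (arcs_on n)"
  by (rule finite_subset[of _ "{1..n} \<times> {1..n}"]) (auto simp: arcs_on_def)

definition crossing :: "nat \<times> nat \<Rightarrow> nat \<times> nat \<Rightarrow> bool" where
  "crossing a b \<longleftrightarrow> fst a < fst b \<and> fst b < snd a \<and> snd a < snd b"

lemma not_crossing_self: "\<not> crossing a a"
  unfolding crossing_def by simp

definition compatible_arcs :: "nat \<times> nat \<Rightarrow> nat \<times> nat \<Rightarrow> bool" where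
  "compatible_arcs a b \<longleftrightarrow>
     disjnt {fst a, snd a} {fst b, snd b} \<and> \<not> crossing a b \<and> \<not> crossing b a"

lemma symp_compatible_arcs: "symp compatible_arcs"
  unfolding symp_def compatible_arcs_def by (auto simp: disjnt_sym)

lemma pairwise_compatible_arcs_iff:
  "pairwise compatible_arcs A \<longleftrightarrow>
     (\<forall>a\<in>A. \<forall>b\<in>A. a \<noteq> b \<longrightarrow> disjnt {fst a, snd a} {fst b, snd b}) \<and>
     (\<forall>a\<in>A. \<forall>b\<in>A. \<not> crossing a b)"
  unfolding pairwise_def compatible_arcs_def by (metis not_crossing_self)

lemma inj_on_fst_if_compatible:
  assumes "pairwise compatible_arcs A"
  shows "inj_on fst A"
proof (rule inj_onI, rule ccontr)
  fix a b assume "a \<in> A" "b \<in> A" "fst a = fst b" "a \<noteq> b"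
  then have "compatible_arcs a b" using pairwiseD(1)[OF assms] by blast
  then show False using \<open>fst a = fst b\<close> unfolding compatible_arcs_def disjnt_def by auto
qed

lemma diagram_iff: "diagram n A \<longleftrightarrow> A \<subseteq> arcs_on n \<and> pairwise compatible_arcs A"
  unfolding diagram_def arcs_on_def pairwise_compatible_arcs_iff crossing_def disjnt_def case_prod_beta
  by simp

text \<open>\<open>(i - 1, j + 1) \<notin> A\<close> says that \<open>(i, j)\<close> is the outermost arc of its stack.\<close>

definition long_stacks :: "nat \<Rightarrow> (nat \<times> nat) set \<Rightarrow> bool" where
  "long_stacks r A \<longleftrightarrow>
     (\<forall>i j. (i, j) \<in> A \<longrightarrow> (i - 1, j + 1) \<notin> A \<longrightarrow> (\<forall>t<r. (i + t, j - t) \<in> A))"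

lemma stack_lengths_ge_iff_long_stacks:
  assumes arcs: "\<forall>(i, j)\<in>A. i < j"
  shows "(\<forall>i j s. is_stack A i j s \<longrightarrow> r \<le> s) \<longleftrightarrow> long_stacks r A"
proof
  assume stacks: "\<forall>i j s. is_stack A i j s \<longrightarrow> r \<le> s"
  show "long_stacks r A" unfolding long_stacks_def
  proof (intro allI impI)
    fix i j t assume ij: "(i, j) \<in> A" and outer: "(i - 1, j + 1) \<notin> A" and "t < r"
    define s where "s = (LEAST s. (i + s, j - s) \<notin> A)"
    have "(i + j, j - j) \<notin> A" using arcs by auto
    then have s_end: "(i + s, j - s) \<notin> A" unfolding s_def by (rule LeastI)
    have s_run: "\<forall>t<s. (i + t, j - t) \<in> A" using not_less_Least s_def by blast
    have "1 \<le> s" using ij s_end by (cases s) auto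
    then have "is_stack A i j s" using outer s_end s_run unfolding is_stack_def by auto
    then have "r \<le> s" using stacks by blast
    then show "(i + t, j - t) \<in> A" using s_run \<open>t < r\<close> by auto
  qed
next
  assume long: "long_stacks r A"
  show "\<forall>i j s. is_stack A i j s \<longrightarrow> r \<le> s"
  proof (intro allI impI)
    fix i j s assume "is_stack A i j s"
    then have "(i, j) \<in> A" "(i - 1, j + 1) \<notin> A" "(i + s, j - s) \<notin> A"
      unfolding is_stack_def by (auto dest: spec[of _ 0])
    then show "r \<le> s" using long unfolding long_stacks_def by (meson not_le)
  qed
qed

definition admissible :: "nat \<Rightarrow> nat \<Rightarrow> (nat \<times> nat) set \<Rightarrow> bool" where
  "admissible r lam A \<longleftrightarrow>
     pairwise compatible_arcs A \<and> (\<forall>(i, j)\<in>A. lam \<le> j - i) \<and> long_stacks r A"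

lemma sec_struct_iff: "sec_struct r lam n A \<longleftrightarrow> A \<subseteq> arcs_on n \<and> admissible r lam A"
proof -
  have "A \<subseteq> arcs_on n \<Longrightarrow> \<forall>(i, j)\<in>A. i < j" unfolding arcs_on_def by auto
  then show ?thesis
    using stack_lengths_ge_iff_long_stacks
    unfolding sec_struct_def admissible_def diagram_iff by (metis (no_types))
qed

definition rainbows :: "nat \<Rightarrow> (nat \<times> nat) set \<Rightarrow> (nat \<times> nat) set" where
  "rainbows k A = {a. rainbow A a \<and> snd a - fst a = k}"

lemma rainbows_subset: "rainbows k A \<subseteq> A"
  unfolding rainbows_def rainbow_def by auto

definition separated_at :: "nat \<Rightarrow> (nat \<times> nat) set \<Rightarrow> (nat \<times> nat) set \<Rightarrow> bool" where
  "separated_at m B D \<longleftrightarrow> B \<subseteq> arcs_on m \<and> (\<forall>(i, j)\<in>D. m < i \<and> i < j)"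

lemma separated_atD:
  assumes "separated_at m B D"
  shows "(i, j) \<in> B \<Longrightarrow> i < j \<and> j \<le> m" and "(i, j) \<in> D \<Longrightarrow> m < i \<and> i < j"
  using assms unfolding separated_at_def arcs_on_def by auto

lemma compatible_arcs_if_separated:
  assumes "separated_at m B D" and "a \<in> B" and "b \<in> D"
  shows "compatible_arcs a b"
proof -
  have "fst a < snd a" "snd a < fst b" "fst b < snd b"
    using separated_atD[OF assms(1), of "fst a" "snd a"] separated_atD[OF assms(1), of "fst b" "snd b"]
      assms(2,3) by auto
  then show ?thesis unfolding compatible_arcs_def crossing_def disjnt_def by auto
qed

lemma long_stacks_Un_iff:
  assumes sep: "separated_at m B D"
  shows "long_stacks r (B \<union> D) \<longleftrightarrow> long_stacks r B \<and> long_stacks r D"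
proof -
  have B_only: "(i - 1, j + 1) \<notin> D \<and> (i + t, j - t) \<notin> D" if "(i, j) \<in> B" for i j t
    using separated_atD[OF sep] that by fastforce
  have D_only: "(i - 1, j + 1) \<notin> B \<and> (i + t, j - t) \<notin> B" if "(i, j) \<in> D" for i j t
    using separated_atD[OF sep] that by fastforce
  show ?thesis
    unfolding long_stacks_def using B_only D_only by blast
qed

lemma admissible_Un_iff:
  assumes "separated_at m B D"
  shows "admissible r lam (B \<union> D) \<longleftrightarrow> admissible r lam B \<and> admissible r lam D"
  using assms compatible_arcs_if_separated long_stacks_Un_iff
  unfolding admissible_def pairwise_Un_iff[OF symp_compatible_arcs] by blast

lemma rainbow_Un_iff:
  assumes sep: "separated_at m B D"
  shows "rainbow (B \<union> D) a \<longleftrightarrow> rainbow B a \<or> rainbow D a"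
proof -
  obtain i j where a: "a = (i, j)" by fastforce
  have no_cover: "\<not> (i' \<le> i \<and> j \<le> j')"
    if "(i, j) \<in> B \<and> (i', j') \<in> D \<or> (i, j) \<in> D \<and> (i', j') \<in> B" for i' j'
    using separated_atD[OF sep] that by fastforce
  show ?thesis unfolding rainbow_def a ball_Un using no_cover by auto
qed

lemma card_rainbows_Un:
  assumes sep: "separated_at m B D" and "finite B" and "finite D"
  shows "card (rainbows k (B \<union> D)) = card (rainbows k B) + card (rainbows k D)"
proof -
  have "rainbows k (B \<union> D) = rainbows k B \<union> rainbows k D"
    using rainbow_Un_iff[OF sep] unfolding rainbows_def by auto
  moreover have "B \<inter> D = {}" using separated_atD[OF sep] by fastforce
  then have "rainbows k B \<inter> rainbows k D = {}" using rainbows_subset by blast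
  moreover have "finite (rainbows k B)" "finite (rainbows k D)"
    using rainbows_subset assms(2,3) by (metis finite_subset)+
  ultimately show ?thesis by (simp add: card_Un_disjoint)
qed

definition shift :: "nat \<Rightarrow> (nat \<times> nat) set \<Rightarrow> (nat \<times> nat) set" where
  "shift d A = (\<lambda>(i, j). (i + d, j + d)) ` A"

definition unshift :: "nat \<Rightarrow> (nat \<times> nat) set \<Rightarrow> (nat \<times> nat) set" where
  "unshift d A = {(i, j). (i + d, j + d) \<in> A}"

lemma mem_shift: "(x, y) \<in> shift d A \<longleftrightarrow> d \<le> x \<and> d \<le> y \<and> (x - d, y - d) \<in> A"
proof
  assume "(x, y) \<in> shift d A"
  then show "d \<le> x \<and> d \<le> y \<and> (x - d, y - d) \<in> A" unfolding shift_def by auto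
next
  assume xy: "d \<le> x \<and> d \<le> y \<and> (x - d, y - d) \<in> A"
  then have "(x, y) = (\<lambda>(i, j). (i + d, j + d)) (x - d, y - d)" by simp
  then show "(x, y) \<in> shift d A" unfolding shift_def using xy by blast
qed

lemma shifted_pair_mem_shift [simp]: "(i + d, j + d) \<in> shift d A \<longleftrightarrow> (i, j) \<in> A"
  by (simp add: mem_shift)

lemma unshift_shift [simp]: "unshift d (shift d A) = A"
  unfolding unshift_def by simp

lemma shift_unshift:
  assumes "\<And>i j. (i, j) \<in> A \<Longrightarrow> d \<le> i \<and> d \<le> j"
  shows "shift d (unshift d A) = A"
  using assms unfolding unshift_def by (auto simp: mem_shift)

lemma card_shift: "card (shift d A) = card A"
  unfolding shift_def by (rule card_image) (auto simp: inj_on_def)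

lemma shift_subset_arcs_on:
  assumes "A \<subseteq> arcs_on n"
  shows "shift d A \<subseteq> arcs_on (n + d)" and "\<forall>(i, j)\<in>shift d A. d < i \<and> i < j"
  using assms unfolding arcs_on_def shift_def by auto

lemma separated_at_shift:
  assumes "B \<subseteq> arcs_on m" and "C \<subseteq> arcs_on n"
  shows "separated_at m B (shift m C)"
  using assms shift_subset_arcs_on(2)[OF assms(2)] unfolding separated_at_def by blast

lemma compatible_arcs_shift:
  "compatible_arcs (i + d, j + d) (i' + d, j' + d) \<longleftrightarrow> compatible_arcs (i, j) (i', j')"
  unfolding compatible_arcs_def crossing_def disjnt_def by auto

lemma pairwise_compatible_arcs_shift:
  "pairwise compatible_arcs (shift d A) \<longleftrightarrow> pairwise compatible_arcs A"
proof -
  let ?f = "\<lambda>(i, j). (i + d, j + d)"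
  have compat: "compatible_arcs (?f a) (?f b) \<longleftrightarrow> compatible_arcs a b" for a b
    by (cases a; cases b) (simp add: compatible_arcs_shift)
  have "?f a \<noteq> ?f b \<longleftrightarrow> a \<noteq> b" for a b
    by (cases a; cases b) auto
  then show ?thesis unfolding shift_def pairwise_image by (simp add: compat pairwise_def)
qed

lemma long_stacks_shift:
  assumes arcs: "A \<subseteq> arcs_on n"
  shows "long_stacks r (shift d A) \<longleftrightarrow> long_stacks r A"
proof -
  have outer: "(i + d - 1, j + d + 1) \<in> shift d A \<longleftrightarrow> (i - 1, j + 1) \<in> A" if "(i, j) \<in> A" for i j
    using arcs that unfolding arcs_on_def by (auto simp: mem_shift)
  have inner: "(i + d + t, j + d - t) \<in> shift d A \<longleftrightarrow> (i + t, j - t) \<in> A" if "(i, j) \<in> A" for i j t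
  proof (cases "t \<le> j")
    case True
    then show ?thesis by (auto simp: mem_shift)
  next
    case False
    then show ?thesis using arcs unfolding arcs_on_def by (auto simp: mem_shift)
  qed
  show ?thesis
  proof
    assume "long_stacks r (shift d A)"
    then show "long_stacks r A"
      unfolding long_stacks_def by (metis outer inner shifted_pair_mem_shift)
  next
    assume long: "long_stacks r A"
    show "long_stacks r (shift d A)" unfolding long_stacks_def
    proof (intro allI impI)
      fix x y t
      assume xy: "(x, y) \<in> shift d A" and outer_xy: "(x - 1, y + 1) \<notin> shift d A" and "t < r"
      obtain i j where ij: "(i, j) \<in> A" "x = i + d" "y = j + d"
        using xy unfolding shift_def by auto
      have "(i - 1, j + 1) \<notin> A" using outer[OF ij(1)] outer_xy ij by simp
      then have "(i + t, j - t) \<in> A" using long ij \<open>t < r\<close> unfolding long_stacks_def by blast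
      then show "(x + t, y - t) \<in> shift d A" using inner[OF ij(1), of t] ij by (simp add: ac_simps)
    qed
  qed
qed

lemma admissible_shift_iff:
  assumes "A \<subseteq> arcs_on n"
  shows "admissible r lam (shift d A) \<longleftrightarrow> admissible r lam A"
proof -
  have "(\<forall>(i, j)\<in>shift d A. lam \<le> j - i) \<longleftrightarrow> (\<forall>(i, j)\<in>A. lam \<le> j - i)"
    unfolding shift_def by auto
  then show ?thesis
    unfolding admissible_def pairwise_compatible_arcs_shift long_stacks_shift[OF assms] by simp
qed

lemma rainbow_shift: "rainbow (shift d A) (i + d, j + d) \<longleftrightarrow> rainbow A (i, j)"
  unfolding rainbow_def shift_def by auto

lemma rainbows_shift: "rainbows k (shift d A) = shift d (rainbows k A)"
proof (intro set_eqI)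
  fix a :: "nat \<times> nat"
  obtain x y where a: "a = (x, y)" by fastforce
  show "a \<in> rainbows k (shift d A) \<longleftrightarrow> a \<in> shift d (rainbows k A)"
  proof (cases "d \<le> x \<and> d \<le> y")
    case True
    then have "a = ((x - d) + d, (y - d) + d)" using a by simp
    then show ?thesis using rainbow_shift[of d A "x - d" "y - d"] True a
      unfolding rainbows_def by (auto simp: mem_shift)
  next
    case False
    then show ?thesis using a rainbows_subset[of k "shift d A"] unfolding rainbows_def by (auto simp: mem_shift)
  qed
qed

section \<open>Decomposition at the first block\<close>

definition structures :: "nat \<Rightarrow> nat \<Rightarrow> nat \<Rightarrow> (nat \<times> nat) set set" where
  "structures r lam n = {A. sec_struct r lam n A}"

definition irreducibles :: "nat \<Rightarrow> nat \<Rightarrow> nat \<Rightarrow> (nat \<times> nat) set set" where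
  "irreducibles r lam m = {B. sec_struct r lam m B \<and> irreducible_struct m B}"

lemma finite_structures: "finite (structures r lam n)"
proof (rule finite_subset)
  show "structures r lam n \<subseteq> Pow (arcs_on n)"
    unfolding structures_def sec_struct_iff by auto
qed (simp add: finite_arcs_on)

lemma finite_irreducibles: "finite (irreducibles r lam m)"
  by (rule finite_subset[OF _ finite_structures]) (auto simp: irreducibles_def structures_def)

lemma card_rainbows_le:
  assumes "A \<in> structures r lam n"
  shows "card (rainbows k A) \<le> n"
proof -
  have A_arcs: "A \<subseteq> arcs_on n" and "pairwise compatible_arcs A"
    using assms unfolding structures_def sec_struct_iff admissible_def by auto
  then have "inj_on fst (rainbows k A)"
    using inj_on_fst_if_compatible inj_on_subset rainbows_subset by blast
  moreover have "fst ` rainbows k A \<subseteq> {1..n}"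
    using rainbows_subset[of k A] A_arcs unfolding arcs_on_def by auto
  ultimately show ?thesis using card_inj_on_le[of fst "rainbows k A" "{1..n}"] by simp
qed

text \<open>The partner of vertex 1, or 1 if vertex 1 is unpaired: the number of vertices of the
  irreducible block a structure starts with.\<close>

definition first_block :: "(nat \<times> nat) set \<Rightarrow> nat" where
  "first_block A = (if \<exists>j. (1, j) \<in> A then THE j. (1, j) \<in> A else 1)"

lemma first_block_eq:
  assumes "pairwise compatible_arcs A" and "(1, m) \<in> A"
  shows "first_block A = m"
proof -
  have "j = m" if "(1, j) \<in> A" for j
    using assms that unfolding pairwise_def compatible_arcs_def disjnt_def by fastforce
  with assms(2) have "(THE j. (1, j) \<in> A) = m" by (rule the_equality)
  then show ?thesis unfolding first_block_def using assms(2) by auto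
qed

lemma no_arc_straddles_first_block:
  assumes "A \<subseteq> arcs_on n" and "pairwise compatible_arcs A" and "(i, j) \<in> A" and "i \<le> first_block A"
  shows "j \<le> first_block A"
proof (cases "\<exists>m. (1, m) \<in> A")
  case True
  then obtain m where m: "(1, m) \<in> A" by blast
  show ?thesis
  proof (cases "(i, j) = (1, m)")
    case True
    then show ?thesis using first_block_eq[OF assms(2) m] by simp
  next
    case False
    then have "compatible_arcs (1, m) (i, j)" using pairwiseD(1)[OF assms(2) m assms(3)] by auto
    then show ?thesis using assms(1,3,4) first_block_eq[OF assms(2) m]
      unfolding compatible_arcs_def crossing_def disjnt_def arcs_on_def by auto
  qed
next
  case False
  then show ?thesis using assms(1,3,4) unfolding first_block_def arcs_on_def by auto
qed

definition concat_at :: "nat \<Rightarrow> (nat \<times> nat) set \<Rightarrow> (nat \<times> nat) set \<Rightarrow> (nat \<times> nat) set" where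
  "concat_at m B C = B \<union> shift m C"

definition split_first_block :: "(nat \<times> nat) set \<Rightarrow> nat \<times> (nat \<times> nat) set \<times> (nat \<times> nat) set" where
  "split_first_block A =
     (let m = first_block A in (m, A \<inter> arcs_on m, unshift m (A - arcs_on m)))"

lemma concat_at_structures:
  assumes m: "1 \<le> m" "m \<le> n" and B: "B \<in> irreducibles r lam m" and C: "C \<in> structures r lam (n - m)"
  shows "concat_at m B C \<in> structures r lam n"
    and "first_block (concat_at m B C) = m"
    and "(concat_at m B C) \<inter> arcs_on m = B"
    and "(concat_at m B C) - arcs_on m = shift m C"
unfolding concat_at_def
proof -
  have B_arcs: "B \<subseteq> arcs_on m" and B_adm: "admissible r lam B"
    using B unfolding irreducibles_def sec_struct_iff by auto
  have C_arcs: "C \<subseteq> arcs_on (n - m)" and C_adm: "admissible r lam C"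
    using C unfolding structures_def sec_struct_iff by auto
  have sep: "separated_at m B (shift m C)" by (rule separated_at_shift[OF B_arcs C_arcs])
  have adm: "admissible r lam (B \<union> shift m C)"
    using admissible_Un_iff[OF sep] admissible_shift_iff[OF C_arcs] B_adm C_adm by simp
  have "shift m C \<subseteq> arcs_on n" using shift_subset_arcs_on(1)[OF C_arcs, of m] m by simp
  then show "B \<union> shift m C \<in> structures r lam n"
    using adm B_arcs m unfolding structures_def sec_struct_iff arcs_on_def by auto
  have right: "\<forall>(i, j)\<in>shift m C. m < i" using sep unfolding separated_at_def by auto
  then show "(B \<union> shift m C) \<inter> arcs_on m = B" and "(B \<union> shift m C) - arcs_on m = shift m C"
    using B_arcs unfolding arcs_on_def by auto
  show "first_block (B \<union> shift m C) = m"
  proof (cases "m = 1")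
    case True
    then have "\<not> (\<exists>j. (1, j) \<in> B \<union> shift m C)" using B_arcs right unfolding arcs_on_def by auto
    then show ?thesis using True unfolding first_block_def by simp
  next
    case False
    then have "(1, m) \<in> B \<union> shift m C" using B unfolding irreducibles_def irreducible_struct_def by auto
    then show ?thesis using adm first_block_eq unfolding admissible_def by blast
  qed
qed

lemma first_block_decomposition:
  assumes A: "A \<in> structures r lam n" and n: "1 \<le> n"
  defines "m \<equiv> first_block A"
  shows "1 \<le> m" and "m \<le> n"
    and "A \<inter> arcs_on m \<in> irreducibles r lam m"
    and "unshift m (A - arcs_on m) \<in> structures r lam (n - m)"
    and "concat_at m (A \<inter> arcs_on m) (unshift m (A - arcs_on m)) = A"
proof -
  have A_arcs: "A \<subseteq> arcs_on n" and A_adm: "admissible r lam A"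
    using A unfolding structures_def sec_struct_iff by auto
  have compat: "pairwise compatible_arcs A" using A_adm unfolding admissible_def by blast
  have m_bounds: "1 \<le> m \<and> m \<le> n \<and> (m \<noteq> 1 \<longrightarrow> (1, m) \<in> A)"
  proof (cases "\<exists>j. (1, j) \<in> A")
    case True
    then obtain j where j: "(1, j) \<in> A" by blast
    then show ?thesis using first_block_eq[OF compat j] A_arcs unfolding m_def arcs_on_def by auto
  next
    case False
    then show ?thesis using n unfolding m_def first_block_def by simp
  qed
  then show "1 \<le> m" and "m \<le> n" by auto
  let ?B = "A \<inter> arcs_on m" and ?D = "A - arcs_on m"
  have right: "m < i \<and> i < j" if "(i, j) \<in> ?D" for i j
    using no_arc_straddles_first_block[OF A_arcs compat, of i j] A_arcs that unfolding m_def arcs_on_def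
    by fastforce
  have sep: "separated_at m ?B ?D" using right unfolding separated_at_def by auto
  have "A = ?B \<union> ?D" by blast
  then have adm: "admissible r lam ?B" "admissible r lam ?D"
    using A_adm admissible_Un_iff[OF sep] by auto
  have "irreducible_struct m ?B"
    using m_bounds unfolding irreducible_struct_def arcs_on_def by auto
  then show "?B \<in> irreducibles r lam m"
    using adm(1) unfolding irreducibles_def sec_struct_iff by auto
  have D_shift: "shift m (unshift m ?D) = ?D" using right by (intro shift_unshift) fastforce
  have C_arcs: "unshift m ?D \<subseteq> arcs_on (n - m)"
  proof (rule subrelI)
    fix i j assume "(i, j) \<in> unshift m ?D"
    then have "(i + m, j + m) \<in> ?D" unfolding unshift_def by simp
    then show "(i, j) \<in> arcs_on (n - m)"
      using right[of "i + m" "j + m"] A_arcs unfolding arcs_on_def by auto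
  qed
  then have "admissible r lam (unshift m ?D)"
    using adm(2) admissible_shift_iff[OF C_arcs, of r lam m] D_shift by simp
  then show "unshift m ?D \<in> structures r lam (n - m)"
    using C_arcs unfolding structures_def sec_struct_iff by simp
  show "concat_at m ?B (unshift m ?D) = A" unfolding concat_at_def using D_shift by blast
qed

lemma bij_betw_concat_at:
  assumes "1 \<le> n"
  shows "bij_betw (\<lambda>(m, B, C). concat_at m B C)
           (SIGMA m:{1..n}. irreducibles r lam m \<times> structures r lam (n - m)) (structures r lam n)"
proof (rule bij_betw_byWitness[where f' = split_first_block])
  show "\<forall>x\<in>SIGMA m:{1..n}. irreducibles r lam m \<times> structures r lam (n - m).
          split_first_block ((\<lambda>(m, B, C). concat_at m B C) x) = x"
    using concat_at_structures(2-4) by (auto simp: split_first_block_def)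
  show "\<forall>A\<in>structures r lam n. (\<lambda>(m, B, C). concat_at m B C) (split_first_block A) = A"
    using first_block_decomposition(5)[OF _ assms] by (auto simp: split_first_block_def Let_def)
  show "(\<lambda>(m, B, C). concat_at m B C) ` (SIGMA m:{1..n}. irreducibles r lam m \<times> structures r lam (n - m))
          \<subseteq> structures r lam n"
    using concat_at_structures(1) by auto
  show "split_first_block ` structures r lam n
          \<subseteq> (SIGMA m:{1..n}. irreducibles r lam m \<times> structures r lam (n - m))"
    using first_block_decomposition(1-4)[OF _ assms] by (auto simp: split_first_block_def Let_def)
qed

section \<open>Counting rainbows\<close>

lemma rainbow_irreducible:
  assumes B: "B \<in> irreducibles r lam m" and "m \<noteq> 1"
  shows "rainbow B a \<longleftrightarrow> a = (1, m)"
proof -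
  have root: "(1, m) \<in> B" using assms unfolding irreducibles_def irreducible_struct_def by auto
  have B_arcs: "B \<subseteq> arcs_on m" using B unfolding irreducibles_def sec_struct_iff by auto
  show ?thesis
  proof
    assume "rainbow B a"
    moreover have "1 \<le> fst a \<and> snd a \<le> m" if "a \<in> B" using B_arcs that unfolding arcs_on_def by auto
    ultimately show "a = (1, m)" using root unfolding rainbow_def by auto
  next
    assume "a = (1, m)"
    then show "rainbow B a" using root B_arcs unfolding rainbow_def arcs_on_def by auto
  qed
qed

lemma card_rainbows_irreducible:
  assumes B: "B \<in> irreducibles r lam m" and "1 \<le> m" and "0 < k"
  shows "card (rainbows k B) = (if m = k + 1 then 1 else 0)"
proof (cases "m = 1")
  case True
  then have "B = {}" using B unfolding irreducibles_def sec_struct_iff arcs_on_def by auto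
  then show ?thesis using True \<open>0 < k\<close> unfolding rainbows_def rainbow_def by auto
next
  case False
  then have "rainbows k B = (if m - 1 = k then {(1, m)} else {})"
    using rainbow_irreducible[OF B False] unfolding rainbows_def by auto
  then show ?thesis using \<open>1 \<le> m\<close> by auto
qed

lemma card_rainbows_concat_at:
  assumes "B \<in> irreducibles r lam m" and "C \<in> structures r lam n" and "1 \<le> m" and "0 < k"
  shows "card (rainbows k (concat_at m B C)) = (if m = k + 1 then 1 else 0) + card (rainbows k C)"
proof -
  have B_arcs: "B \<subseteq> arcs_on m" using assms(1) unfolding irreducibles_def sec_struct_iff by auto
  have C_arcs: "C \<subseteq> arcs_on n" using assms(2) unfolding structures_def sec_struct_iff by auto
  have "finite B" "finite (shift m C)"
    using finite_subset[OF B_arcs finite_arcs_on] finite_subset[OF C_arcs finite_arcs_on]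
    unfolding shift_def by auto
  then show ?thesis
    using card_rainbows_Un[OF separated_at_shift[OF B_arcs C_arcs]]
      card_rainbows_irreducible[OF assms(1,3,4)]
    unfolding concat_at_def by (simp add: rainbows_shift card_shift)
qed

definition rainbow_weight :: "nat \<Rightarrow> nat \<Rightarrow> nat \<Rightarrow> real \<Rightarrow> nat \<Rightarrow> real" where
  "rainbow_weight r lam k u n = (\<Sum>A\<in>structures r lam n. u ^ card (rainbows k A))"

lemma rainbow_weight_0: "rainbow_weight r lam k u 0 = 1"
proof -
  have "admissible r lam {}" unfolding admissible_def long_stacks_def by simp
  then have "structures r lam 0 = {{}}"
    unfolding structures_def sec_struct_iff arcs_on_def by auto
  then show ?thesis unfolding rainbow_weight_def rainbows_def rainbow_def by simp
qed

lemma rainbow_weight_recurrence: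
  assumes "1 \<le> n" and "0 < k"
  shows "rainbow_weight r lam k u n =
    (\<Sum>m=1..n. real (card (irreducibles r lam m)) * (if m = k + 1 then u else 1)
                * rainbow_weight r lam k u (n - m))"
proof -
  let ?S = "SIGMA m:{1..n}. irreducibles r lam m \<times> structures r lam (n - m)"
  let ?c = "\<lambda>m. if m = k + 1 then u else 1"
  have "rainbow_weight r lam k u n = (\<Sum>x\<in>?S. u ^ card (rainbows k ((\<lambda>(m, B, C). concat_at m B C) x)))"
    unfolding rainbow_weight_def by (rule sum.reindex_bij_betw[OF bij_betw_concat_at[OF assms(1)], symmetric])
  also have "\<dots> = (\<Sum>(m, B, C)\<in>?S. ?c m * u ^ card (rainbows k C))"
    using card_rainbows_concat_at[OF _ _ _ assms(2)] by (intro sum.cong) (auto simp: power_add)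
  also have "\<dots> = (\<Sum>m=1..n. \<Sum>(B, C)\<in>irreducibles r lam m \<times> structures r lam (n - m). ?c m * u ^ card (rainbows k C))"
    by (rule sum.Sigma[symmetric]) (auto simp: finite_irreducibles finite_structures)
  also have "\<dots> = (\<Sum>m=1..n. real (card (irreducibles r lam m)) * ?c m * rainbow_weight r lam k u (n - m))"
    by (simp add: sum.cartesian_product[symmetric] rainbow_weight_def sum_distrib_left mult.assoc)
  finally show ?thesis .
qed

lemma fps_nth_S_gf: "S_gf r lam k u $ n = rainbow_weight r lam k u n"
proof -
  let ?b = "\<lambda>A. card (rainbows k A)"
  have "rainbow_weight r lam k u n = (\<Sum>b\<le>n. \<Sum>A\<in>{A\<in>structures r lam n. ?b A = b}. u ^ ?b A)"
    unfolding rainbow_weight_def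
    by (rule sum.group[symmetric]) (auto simp: finite_structures card_rainbows_le)
  also have "\<dots> = (\<Sum>b\<le>n. real (s_count r lam k n b) * u ^ b)"
  proof (intro sum.cong refl)
    fix b
    have "s_count r lam k n b = card {A\<in>structures r lam n. ?b A = b}"
      unfolding s_count_def structures_def rainbows_def by simp
    then show "(\<Sum>A\<in>{A\<in>structures r lam n. ?b A = b}. u ^ ?b A) = real (s_count r lam k n b) * u ^ b"
      by simp
  qed
  finally show ?thesis unfolding S_gf_def by simp
qed

theorem lemma2:
  fixes lam r k :: nat and u :: real
  assumes "lam > 0" and "r > 0" and "k > 0"
  shows "S_gf r lam k u =
    1 / (1 - F_gf r lam - fps_const ((u - 1) * real (f_count r lam (k + 1))) * fps_X ^ (k + 1))"
proof -
  \<comment> \<open>Only \<open>k > 0\<close> is used: for \<open>k = 0\<close> the block with \<open>m = k + 1\<close> would be the one-vertex block,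
    which has no rainbow.\<close>
  define g where "g = F_gf r lam + fps_const ((u - 1) * real (f_count r lam (k + 1))) * fps_X ^ (k + 1)"
  have f_count_eq: "f_count r lam m = card (irreducibles r lam m)" for m
    unfolding f_count_def irreducibles_def ..
  have g_nth: "g $ i = real (card (irreducibles r lam i)) * (if i = k + 1 then u else 1)" if "0 < i" for i
    using that unfolding g_def by (auto simp: F_gf_def f_count_eq algebra_simps)
  have "S_gf r lam k u = 1 / (1 - g)"
  proof (rule fps_eq_one_div_if_convolution_recurrence)
    show "g $ 0 = 0" unfolding g_def by (simp add: F_gf_def)
    show "S_gf r lam k u $ 0 = 1" by (simp add: fps_nth_S_gf rainbow_weight_0)
    show "S_gf r lam k u $ n = (\<Sum>i=1..n. g $ i * S_gf r lam k u $ (n - i))" if "0 < n" for n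
      using rainbow_weight_recurrence[of n k r lam u] that assms(3)
      by (simp add: fps_nth_S_gf g_nth)
  qed
  then show ?thesis unfolding g_def by (simp add: diff_diff_eq)
qed

end
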